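(* For every positive integer $k$, the $k\times k$ grid graph $R_k$ satisfies $\tau(R_k)=\nu(R_k)=k$.
   Context: $R_k$ is the planar grid graph with vertex set $\{1,\dots,k\}^2$ in which $(i,j)$ and $(i',j')$ are adjacent iff $|i-i'|+|j-j'|=1$. Thicket of $G=(V,E)$: a finite collection $\mathcal H$ of nonempty subsets of $V$ each inducing a connected subgraph and pairwise intersecting; $\tau(\mathcal H)$ is the minimum size of a set meeting every member, and the thicket number $\tau(G)$ is the maximum of $\tau(\mathcal H)$ over all thickets. Vine decomposition: a tree $T$ with labels $V_t\subseteq V$ such that for each vertex $v$ the set $T_v=\{t:v\in V_t\}$ is nonempty and connected in $T$, and for each edge $uv$, $T_u$ and $T_v$ share a node or contain nodes adjacent in $T$; width $\max_t|V_t|$; vinewidth $\nu(G)$ is the minimum width. *)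

theory Defs
  imports Main
begin

(* A graph is given by a vertex set V and a (symmetric, irreflexive) adjacency predicate E. *)

definition connected_in :: "('a \<Rightarrow> 'a \<Rightarrow> bool) \<Rightarrow> 'a set \<Rightarrow> bool" where
  "connected_in E X \<longleftrightarrow> X \<noteq> {} \<and>
     (\<forall>x\<in>X. \<forall>y\<in>X. (\<lambda>a b. a \<in> X \<and> b \<in> X \<and> E a b)\<^sup>*\<^sup>* x y)"

definition thicket :: "'a set \<Rightarrow> ('a \<Rightarrow> 'a \<Rightarrow> bool) \<Rightarrow> 'a set set \<Rightarrow> bool" where
  "thicket V E H \<longleftrightarrow> finite H \<and>
     (\<forall>X\<in>H. X \<subseteq> V \<and> connected_in E X) \<and>
     (\<forall>X\<in>H. \<forall>Y\<in>H. X \<inter> Y \<noteq> {})"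

definition hitting_number :: "'a set \<Rightarrow> 'a set set \<Rightarrow> nat" where
  "hitting_number V H = Inf {card S | S. S \<subseteq> V \<and> (\<forall>X\<in>H. S \<inter> X \<noteq> {})}"

definition thicket_number :: "'a set \<Rightarrow> ('a \<Rightarrow> 'a \<Rightarrow> bool) \<Rightarrow> nat" where
  "thicket_number V E = Max {hitting_number V H | H. thicket V E H}"

definition is_tree :: "'t set \<Rightarrow> ('t \<Rightarrow> 't \<Rightarrow> bool) \<Rightarrow> bool" where
  "is_tree N A \<longleftrightarrow> finite N \<and>
     (\<forall>s t. A s t \<longrightarrow> s \<in> N \<and> t \<in> N \<and> s \<noteq> t \<and> A t s) \<and>
     connected_in A N \<and>
     (\<forall>s t. A s t \<longrightarrow> \<not> connected_in (\<lambda>a b. A a b \<and> {a, b} \<noteq> {s, t}) N)"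

definition vine_decomposition ::
  "'a set \<Rightarrow> ('a \<Rightarrow> 'a \<Rightarrow> bool) \<Rightarrow> 't set \<Rightarrow> ('t \<Rightarrow> 't \<Rightarrow> bool) \<Rightarrow> ('t \<Rightarrow> 'a set) \<Rightarrow> bool" where
  "vine_decomposition V E N A L \<longleftrightarrow> is_tree N A \<and>
     (\<forall>t\<in>N. L t \<subseteq> V) \<and>
     (\<forall>v\<in>V. connected_in A {t\<in>N. v \<in> L t}) \<and>
     (\<forall>u\<in>V. \<forall>v\<in>V. E u v \<longrightarrow>
        ({t\<in>N. u \<in> L t} \<inter> {t\<in>N. v \<in> L t} \<noteq> {} \<or>
         (\<exists>s\<in>{t\<in>N. u \<in> L t}. \<exists>t\<in>{t\<in>N. v \<in> L t}. A s t)))"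

definition width :: "'t set \<Rightarrow> ('t \<Rightarrow> 'a set) \<Rightarrow> nat" where
  "width N L = Max ((\<lambda>t. card (L t)) ` N)"

(* vinewidth: minimum width over all vine decompositions (tree nodes taken to be naturals,
   which is no loss of generality since trees are finite) *)
definition vinewidth :: "'a set \<Rightarrow> ('a \<Rightarrow> 'a \<Rightarrow> bool) \<Rightarrow> nat" where
  "vinewidth V E = Inf {width N L | (N :: nat set) A L. vine_decomposition V E N A L}"

definition grid_V :: "nat \<Rightarrow> (nat \<times> nat) set" where
  "grid_V k = {1..k} \<times> {1..k}"

definition grid_E :: "nat \<times> nat \<Rightarrow> nat \<times> nat \<Rightarrow> bool" where
  "grid_E p q \<longleftrightarrow> \<bar>int (fst p) - int (fst q)\<bar> + \<bar>int (snd p) - int (snd q)\<bar> = 1"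

end

theory Submission
  imports Defs
begin

(*
  A thicket is hit by a single bag of any vine decomposition: the nodes whose bags meet a
  member of the thicket form a subtree, these subtrees pairwise intersect, and pairwise
  intersecting subtrees of a finite tree share a node (Helly property, proved by splitting
  the tree at an edge).  Hence tau <= nu.  For the grid R_k, the k^2 crosses (row i union
  column j) form a thicket that no set of fewer than k vertices hits, since such a set misses
  some row and some column; and the rows, arranged along a path, form a vine decomposition of
  width k.  So k <= tau <= nu <= k.
*)

section \<open>Connected sets and thickets\<close>

abbreviation linked_in :: "('a \<Rightarrow> 'a \<Rightarrow> bool) \<Rightarrow> 'a set \<Rightarrow> 'a \<Rightarrow> 'a \<Rightarrow> bool" where
  "linked_in E X \<equiv> (\<lambda>a b. a \<in> X \<and> b \<in> X \<and> E a b)\<^sup>*\<^sup>*"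

lemma linked_in_mono:
  assumes "X \<subseteq> Y" "linked_in E X x y"
  shows "linked_in E Y x y"
  using assms(2) by (rule mono_rtranclp[rule_format, rotated]) (use assms(1) in blast)

lemma connected_in_Un:
  assumes X: "connected_in E X" and Y: "connected_in E Y" and "X \<inter> Y \<noteq> {}"
  shows "connected_in E (X \<union> Y)"
  unfolding connected_in_def
proof (intro conjI ballI)
  show "X \<union> Y \<noteq> {}" using assms(3) by blast
  obtain z where z: "z \<in> X" "z \<in> Y" using assms(3) by blast
  have via_z: "linked_in E (X \<union> Y) x z \<and> linked_in E (X \<union> Y) z x" if "x \<in> X \<union> Y" for x
  proof (cases "x \<in> X")
    case True
    then show ?thesis using X z linked_in_mono[of X "X \<union> Y" E] unfolding connected_in_def by blast
  next
    case False
    then have "x \<in> Y" using that by blast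
    then show ?thesis using Y z linked_in_mono[of Y "X \<union> Y" E] unfolding connected_in_def by blast
  qed
  fix x y assume "x \<in> X \<union> Y" "y \<in> X \<union> Y"
  then show "linked_in E (X \<union> Y) x y" using via_z[of x] via_z[of y] by (meson rtranclp_trans)
qed

lemma connected_in_chain:
  assumes "symp E" "a \<le> b" "\<And>i. a \<le> i \<Longrightarrow> i < b \<Longrightarrow> E (f i) (f (Suc i))"
  shows "connected_in E (f ` {a..b})"
proof -
  let ?X = "f ` {a..b}"
  have forward: "linked_in E ?X (f i) (f j)" if "a \<le> i" "i \<le> j" "j \<le> b" for i j
    using that(2,3)
  proof (induction j rule: dec_induct)
    case (step j)
    then have "f j \<in> ?X" "f (Suc j) \<in> ?X" using that(1) by auto
    with step assms(3)[of j] that(1) show ?case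
      by (simp add: rtranclp.rtrancl_into_rtrancl)
  qed simp
  have "symp (linked_in E ?X)"
    using assms(1) by (intro symp_rtranclp) (auto simp: symp_def)
  then have "linked_in E ?X (f i) (f j)" if "i \<in> {a..b}" "j \<in> {a..b}" for i j
  proof (cases "i \<le> j")
    case False
    then have "linked_in E ?X (f j) (f i)" using that forward by simp
    then show ?thesis by (rule sympD[OF \<open>symp (linked_in E ?X)\<close>])
  qed (use that forward in simp)
  then show ?thesis
    unfolding connected_in_def using assms(2) by auto
qed

lemma connected_in_without_edges:
  assumes "connected_in A X" "\<And>s t. s \<in> X \<Longrightarrow> t \<in> X \<Longrightarrow> \<not> A s t"
  shows "\<exists>n. X = {n}"
proof -
  have "x = y" if "linked_in A X x y" for x y
    using that by induction (use assms(2) in auto)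
  then show ?thesis using assms(1) unfolding connected_in_def by blast
qed

lemma connected_in_UN:
  assumes conn: "connected_in E X"
    and parts: "\<And>v. v \<in> X \<Longrightarrow> connected_in A (T v)"
    and adj: "\<And>u v. u \<in> X \<Longrightarrow> v \<in> X \<Longrightarrow> E u v \<Longrightarrow>
                T u \<inter> T v \<noteq> {} \<or> (\<exists>s\<in>T u. \<exists>t\<in>T v. A s t)"
  shows "connected_in A (\<Union>v\<in>X. T v)"
proof -
  let ?U = "\<Union>v\<in>X. T v"
  have inside: "linked_in A ?U s t" if "v \<in> X" "s \<in> T v" "t \<in> T v" for v s t
  proof -
    have "linked_in A (T v) s t" using parts[OF that(1)] that(2,3) unfolding connected_in_def by blast
    then show ?thesis by (rule linked_in_mono[rotated]) (use that(1) in blast)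
  qed
  have along: "\<forall>s\<in>T u. \<forall>t\<in>T w. linked_in A ?U s t"
    if "linked_in E X u w" "u \<in> X" for u w
    using that(1)
  proof (induction rule: rtranclp_induct)
    case base then show ?case using inside[OF that(2)] by blast
  next
    case (step w v)
    then have wv: "w \<in> X" "v \<in> X" "E w v" by auto
    show ?case
    proof (intro ballI)
      fix s t assume s: "s \<in> T u" and t: "t \<in> T v"
      from adj[OF wv]
      consider (shared) r where "r \<in> T w" "r \<in> T v"
        | (adjacent) r r' where "r \<in> T w" "r' \<in> T v" "A r r'" by blast
      then show "linked_in A ?U s t"
      proof cases
        case shared
        have "linked_in A ?U s r" using step.IH s shared(1) by blast
        also have "linked_in A ?U r t" using inside[OF wv(2) shared(2) t] .
        finally show ?thesis .
      next
        case adjacent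
        have "linked_in A ?U s r" using step.IH s adjacent(1) by blast
        also have "linked_in A ?U r r'"
          using adjacent wv by (intro r_into_rtranclp) blast
        also have "linked_in A ?U r' t" using inside[OF wv(2) adjacent(2) t] .
        finally show ?thesis .
      qed
    qed
  qed
  show ?thesis
    unfolding connected_in_def
  proof (intro conjI ballI)
    obtain v where v: "v \<in> X" using conn unfolding connected_in_def by blast
    then obtain t where "t \<in> T v" using parts[OF v] unfolding connected_in_def by blast
    with v show "?U \<noteq> {}" by blast
  next
    fix s t assume "s \<in> ?U" "t \<in> ?U"
    then obtain u w where uw: "u \<in> X" "w \<in> X" and "s \<in> T u" "t \<in> T w" by blast
    moreover have "linked_in E X u w" using conn uw unfolding connected_in_def by blast
    ultimately show "linked_in A ?U s t" using along by blast
  qed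
qed

lemma thicketD:
  assumes "thicket V E H"
  shows thicket_finite: "finite H"
    and thicket_subset: "X \<in> H \<Longrightarrow> X \<subseteq> V"
    and thicket_connected: "X \<in> H \<Longrightarrow> connected_in E X"
    and thicket_meet: "X \<in> H \<Longrightarrow> Y \<in> H \<Longrightarrow> X \<inter> Y \<noteq> {}"
  using assms unfolding thicket_def by auto

lemma thicket_nonempty: "thicket V E H \<Longrightarrow> X \<in> H \<Longrightarrow> X \<noteq> {}"
  using thicket_connected unfolding connected_in_def by blast

lemma thicket_image:
  assumes "finite H" "\<And>X. X \<in> H \<Longrightarrow> f X \<subseteq> V" "\<And>X. X \<in> H \<Longrightarrow> connected_in E (f X)"
    "\<And>X Y. X \<in> H \<Longrightarrow> Y \<in> H \<Longrightarrow> f X \<inter> f Y \<noteq> {}"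
  shows "thicket V E (f ` H)"
  using assms unfolding thicket_def by blast

section \<open>Helly property of subtrees\<close>

(* Unlike is_tree, edges of A may leave N, so that the notion passes to the two sides of an edge. *)

definition tree_on :: "'t set \<Rightarrow> ('t \<Rightarrow> 't \<Rightarrow> bool) \<Rightarrow> bool" where
  "tree_on N A \<longleftrightarrow> finite N \<and> symp A \<and> connected_in A N \<and>
     (\<forall>s\<in>N. \<forall>t\<in>N. A s t \<longrightarrow> \<not> connected_in (\<lambda>a b. A a b \<and> {a, b} \<noteq> {s, t}) N)"

lemma is_tree_imp_tree_on: "is_tree N A \<Longrightarrow> tree_on N A"
  unfolding is_tree_def tree_on_def symp_def by blast

definition single_edge_cut :: "'t set \<Rightarrow> ('t \<Rightarrow> 't \<Rightarrow> bool) \<Rightarrow> 't set \<Rightarrow> 't \<Rightarrow> 't \<Rightarrow> bool" where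
  "single_edge_cut N A P c d \<longleftrightarrow> P \<subseteq> N \<and> c \<in> P \<and> d \<in> N - P \<and>
     (\<forall>a\<in>P. \<forall>b\<in>N - P. A a b \<or> A b a \<longrightarrow> a = c \<and> b = d)"

lemma single_edge_cut_complement:
  "single_edge_cut N A P c d \<Longrightarrow> single_edge_cut N A (N - P) d c"
  unfolding single_edge_cut_def by blast

lemma connected_in_across_cut:
  assumes cut: "single_edge_cut N A P c d" and "X \<subseteq> N" "connected_in A X"
    and "X \<inter> P \<noteq> {}" "\<not> X \<subseteq> P"
  shows "c \<in> X \<and> d \<in> X"
proof -
  obtain x y where x: "x \<in> X" "x \<in> P" and y: "y \<in> X" "y \<notin> P" using assms(4,5) by blast
  have "linked_in A X x y" using assms(3) x y unfolding connected_in_def by blast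
  then have "y \<notin> P \<Longrightarrow> c \<in> X \<and> d \<in> X"
  proof (induction rule: rtranclp_induct)
    case (step y z)
    then show ?case
      using cut assms(2) unfolding single_edge_cut_def by (cases "y \<in> P") blast+
  qed (use x in simp)
  then show ?thesis using y by blast
qed

lemma connected_in_Int_cut:
  assumes cut: "single_edge_cut N A P c d" and XN: "X \<subseteq> N"
    and X: "connected_in A X" and "X \<inter> P \<noteq> {}"
  shows "connected_in A (X \<inter> P)"
proof -
  (* Collapsing N - P onto c turns walks in X into walks in X \<inter> P. *)
  define retract where "retract v = (if v \<in> P then v else c)" for v
  have crossing: "a = c" if "a \<in> P" "b \<in> X" "b \<notin> P" "A a b \<or> A b a" for a b
  proof -
    have "b \<in> N - P" using that(2,3) XN by blast
    then show ?thesis using cut that(1,4) unfolding single_edge_cut_def by blast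
  qed
  have retracted: "linked_in A (X \<inter> P) (retract x) (retract y)" if "linked_in A X x y" for x y
    using that
  proof (induction rule: rtranclp_induct)
    case (step y z)
    have yz: "y \<in> X" "z \<in> X" "A y z" using step(2) by auto
    have "linked_in A (X \<inter> P) (retract y) (retract z)"
    proof (cases "y \<in> P"; cases "z \<in> P")
      assume "y \<in> P" "z \<in> P"
      then show ?thesis using yz unfolding retract_def by (simp add: r_into_rtranclp)
    next
      assume "y \<in> P" "z \<notin> P"
      then show ?thesis using crossing[of y z] yz unfolding retract_def by simp
    next
      assume "y \<notin> P" "z \<in> P"
      then show ?thesis using crossing[of z y] yz unfolding retract_def by simp
    next
      assume "y \<notin> P" "z \<notin> P"
      then show ?thesis unfolding retract_def by simp
    qed
    with step.IH show ?case by simp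
  qed simp
  have "linked_in A (X \<inter> P) x y" if "x \<in> X \<inter> P" "y \<in> X \<inter> P" for x y
  proof -
    have "linked_in A X x y" using X that unfolding connected_in_def by blast
    then show ?thesis using retracted[of x y] that unfolding retract_def by simp
  qed
  then show ?thesis using assms(4) unfolding connected_in_def by blast
qed

lemma connected_in_remove_edge_superset:
  assumes "P \<subseteq> N" "a \<in> P" "b \<in> P" "connected_in A N"
    and "connected_in (\<lambda>u v. A u v \<and> {u, v} \<noteq> {a, b}) P"
  shows "connected_in (\<lambda>u v. A u v \<and> {u, v} \<noteq> {a, b}) N"
proof -
  let ?A' = "\<lambda>u v. A u v \<and> {u, v} \<noteq> {a, b}"
  have "linked_in ?A' N x y" if "linked_in A N x y" for x y
    using that
  proof (induction rule: rtranclp_induct)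
    case (step y z)
    show ?case
    proof (cases "{y, z} = {a, b}")
      case True
      then have "linked_in ?A' P y z"
        using assms(2,3,5) unfolding connected_in_def by (auto simp: doubleton_eq_iff)
      then have "linked_in ?A' N y z" by (rule linked_in_mono[rotated]) (use assms(1) in blast)
      with step.IH show ?thesis by simp
    next
      case False
      with step show ?thesis by (simp add: rtranclp.rtrancl_into_rtrancl)
    qed
  qed simp
  then show ?thesis using assms(4) unfolding connected_in_def by blast
qed

lemma tree_on_cut:
  assumes tree: "tree_on N A" and cut: "single_edge_cut N A P c d"
  shows "tree_on P A"
  unfolding tree_on_def
proof (intro conjI ballI impI)
  have PN: "P \<subseteq> N" using cut unfolding single_edge_cut_def by blast
  show "finite P" using tree PN finite_subset unfolding tree_on_def by blast
  show "symp A" using tree unfolding tree_on_def by blast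
  have "connected_in A (N \<inter> P)"
    using connected_in_Int_cut[OF cut order_refl] tree cut unfolding tree_on_def single_edge_cut_def by blast
  then show "connected_in A P" using PN by (simp add: Int_absorb1)
  fix s t assume "s \<in> P" "t \<in> P" "A s t"
  then show "\<not> connected_in (\<lambda>a b. A a b \<and> {a, b} \<noteq> {s, t}) P"
    using connected_in_remove_edge_superset[OF PN] tree PN unfolding tree_on_def by blast
qed

lemma tree_on_edge_is_bridge:
  assumes tree: "tree_on N A" and "s \<in> N" "t \<in> N" "A s t"
  shows "\<not> linked_in (\<lambda>a b. A a b \<and> {a, b} \<noteq> {s, t}) N s t"
proof
  let ?A' = "\<lambda>a b. A a b \<and> {a, b} \<noteq> {s, t}"
  assume st: "linked_in ?A' N s t"
  have "symp (linked_in ?A' N)"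
    using tree unfolding tree_on_def by (intro symp_rtranclp) (auto simp: symp_def insert_commute)
  then have ts: "linked_in ?A' N t s" using st by (rule sympD)
  have "linked_in ?A' N x y" if "linked_in A N x y" for x y
    using that
  proof (induction rule: rtranclp_induct)
    case (step y z)
    have "linked_in ?A' N y z"
    proof (cases "{y, z} = {s, t}")
      case True
      then show ?thesis using st ts by (auto simp: doubleton_eq_iff)
    qed (use step(2) in \<open>simp add: r_into_rtranclp\<close>)
    with step.IH show ?case by simp
  qed simp
  then have "connected_in ?A' N" using tree unfolding tree_on_def connected_in_def by blast
  then show False using tree assms(2-4) unfolding tree_on_def by blast
qed

lemma tree_on_edge_cut:
  assumes tree: "tree_on N A" and "s \<in> N" "t \<in> N" "A s t"
  obtains P where "single_edge_cut N A P s t"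
proof -
  let ?A' = "\<lambda>a b. A a b \<and> {a, b} \<noteq> {s, t}"
  define P where "P = {v \<in> N. linked_in ?A' N s v}"
  have "t \<notin> P" using tree_on_edge_is_bridge[OF assms] unfolding P_def by blast
  moreover have "a = s \<and> b = t" if "a \<in> P" "b \<in> N - P" "A a b \<or> A b a" for a b
  proof -
    have "A a b" using that(3) tree unfolding tree_on_def by (auto dest: sympD)
    have "{a, b} = {s, t}"
    proof (rule ccontr)
      assume "{a, b} \<noteq> {s, t}"
      with \<open>A a b\<close> that(1,2) have "b \<in> P"
        unfolding P_def by (auto intro: rtranclp.rtrancl_into_rtrancl)
      with that(2) show False by blast
    qed
    with that(1) \<open>t \<notin> P\<close> show ?thesis by (auto simp: doubleton_eq_iff)
  qed
  ultimately have "single_edge_cut N A P s t"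
    using assms(2,3) unfolding single_edge_cut_def P_def by auto
  then show ?thesis by (rule that)
qed

lemma thicket_Int_cut:
  assumes cut: "single_edge_cut N A Q c d" and F: "thicket N A F" and "X0 \<in> F" "X0 \<subseteq> Q"
  shows "thicket Q A ((\<lambda>X. X \<inter> Q) ` F)"
proof (rule thicket_image[OF thicket_finite[OF F]])
  have meets: "X \<inter> Q \<noteq> {}" if "X \<in> F" for X
    using thicket_meet[OF F that assms(3)] assms(4) by blast
  have across: "c \<in> X" if "X \<in> F" "\<not> X \<subseteq> Q" for X
    using connected_in_across_cut[OF cut thicket_subset[OF F] thicket_connected[OF F] meets] that
    by blast
  fix X Y assume X: "X \<in> F"
  show "X \<inter> Q \<subseteq> Q" by blast
  show "connected_in A (X \<inter> Q)"
    by (rule connected_in_Int_cut[OF cut thicket_subset[OF F X] thicket_connected[OF F X] meets[OF X]])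
  assume Y: "Y \<in> F"
  show "X \<inter> Q \<inter> (Y \<inter> Q) \<noteq> {}"
  proof (cases "X \<subseteq> Q \<or> Y \<subseteq> Q")
    case True
    then show ?thesis using thicket_meet[OF F X Y] by blast
  next
    case False
    then have "c \<in> X" "c \<in> Y" using across X Y by blast+
    then show ?thesis using cut unfolding single_edge_cut_def by blast
  qed
qed

lemma thicket_straddling_cut:
  assumes cut: "single_edge_cut N A P c d" and F: "thicket N A F"
    and straddle: "\<And>X. X \<in> F \<Longrightarrow> \<not> X \<subseteq> P \<and> \<not> X \<subseteq> N - P"
    and "X \<in> F"
  shows "c \<in> X"
proof -
  have "X \<inter> P \<noteq> {}" "\<not> X \<subseteq> P"
    using straddle[OF \<open>X \<in> F\<close>] thicket_subset[OF F \<open>X \<in> F\<close>] by blast+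
  then show ?thesis
    using connected_in_across_cut[OF cut thicket_subset[OF F \<open>X \<in> F\<close>] thicket_connected[OF F \<open>X \<in> F\<close>]]
    by blast
qed

lemma tree_on_thicket_common_node:
  assumes "tree_on N A" "thicket N A F"
  shows "\<exists>t\<in>N. \<forall>X\<in>F. t \<in> X"
  using assms
proof (induction "card N" arbitrary: N F rule: less_induct)
  case less
  have descend: "\<exists>t\<in>N. \<forall>X\<in>F. t \<in> X"
    if cut: "single_edge_cut N A Q c d" and "X0 \<in> F" "X0 \<subseteq> Q" for Q c d X0
  proof -
    have "Q \<subset> N" using cut unfolding single_edge_cut_def by blast
    moreover have "finite N" using less.prems(1) unfolding tree_on_def by blast
    ultimately have "card Q < card N" by (simp add: psubset_card_mono)
    from less.hyps[OF this tree_on_cut[OF less.prems(1) cut] thicket_Int_cut[OF cut less.prems(2) that(2,3)]]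
    obtain t where t: "t \<in> Q" "\<forall>Y\<in>(\<lambda>X. X \<inter> Q) ` F. t \<in> Y" by blast
    then have "\<forall>X\<in>F. t \<in> X" by simp
    with t(1) \<open>Q \<subset> N\<close> show ?thesis by blast
  qed
  show ?case
  proof (cases "\<exists>s\<in>N. \<exists>t\<in>N. A s t")
    case False
    have "connected_in A N" using less.prems(1) unfolding tree_on_def by blast
    then have "\<exists>n. N = {n}" by (rule connected_in_without_edges) (use False in blast)
    then obtain n where "N = {n}" by blast
    then show ?thesis
      using thicket_subset[OF less.prems(2)] thicket_nonempty[OF less.prems(2)] by blast
  next
    case True
    then obtain s t where st: "s \<in> N" "t \<in> N" "A s t" by blast
    obtain P where cut: "single_edge_cut N A P s t"
      by (rule tree_on_edge_cut[OF less.prems(1) st])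
    show ?thesis
    proof (cases "\<exists>X0\<in>F. X0 \<subseteq> P \<or> X0 \<subseteq> N - P")
      case True
      then obtain X0 where "X0 \<in> F" "X0 \<subseteq> P \<or> X0 \<subseteq> N - P" by blast
      then show ?thesis
        using descend[OF cut, of X0] descend[OF single_edge_cut_complement[OF cut], of X0] by blast
    next
      case False
      then have "s \<in> X" if "X \<in> F" for X
        using thicket_straddling_cut[OF cut less.prems(2) _ that] by blast
      then show ?thesis using cut unfolding single_edge_cut_def by blast
    qed
  qed
qed

section \<open>Thickets versus vine decompositions\<close>

lemma vine_decomposition_subtree:
  "vine_decomposition V E N A L \<Longrightarrow> v \<in> V \<Longrightarrow> connected_in A {t \<in> N. v \<in> L t}"
  unfolding vine_decomposition_def by blast

lemma vine_decomposition_edge: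
  assumes "vine_decomposition V E N A L" "u \<in> V" "v \<in> V" "E u v"
  shows "{t \<in> N. u \<in> L t} \<inter> {t \<in> N. v \<in> L t} \<noteq> {} \<or>
    (\<exists>s\<in>{t \<in> N. u \<in> L t}. \<exists>t\<in>{t \<in> N. v \<in> L t}. A s t)"
  using assms unfolding vine_decomposition_def by blast

lemma connected_in_bags_meeting:
  assumes vd: "vine_decomposition V E N A L" and XV: "X \<subseteq> V" and X: "connected_in E X"
  shows "connected_in A {t \<in> N. L t \<inter> X \<noteq> {}}"
proof -
  let ?T = "\<lambda>v. {t \<in> N. v \<in> L t}"
  have "connected_in A (\<Union>v\<in>X. ?T v)"
  proof (rule connected_in_UN[OF X])
    show "connected_in A (?T v)" if "v \<in> X" for v
      using vine_decomposition_subtree[OF vd] that XV by blast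
    fix u v assume "u \<in> X" "v \<in> X" "E u v"
    then show "?T u \<inter> ?T v \<noteq> {} \<or> (\<exists>s\<in>?T u. \<exists>t\<in>?T v. A s t)"
      using XV by (intro vine_decomposition_edge[OF vd]) blast+
  qed
  moreover have "(\<Union>v\<in>X. ?T v) = {t \<in> N. L t \<inter> X \<noteq> {}}" by blast
  ultimately show ?thesis by simp
qed

lemma thicket_bags_meeting:
  assumes vd: "vine_decomposition V E N A L" and H: "thicket V E H"
  shows "thicket N A ((\<lambda>X. {t \<in> N. L t \<inter> X \<noteq> {}}) ` H)"
proof (rule thicket_image[OF thicket_finite[OF H]])
  fix X Y assume X: "X \<in> H"
  show "{t \<in> N. L t \<inter> X \<noteq> {}} \<subseteq> N" by blast
  show "connected_in A {t \<in> N. L t \<inter> X \<noteq> {}}"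
    by (rule connected_in_bags_meeting[OF vd thicket_subset[OF H X] thicket_connected[OF H X]])
  assume Y: "Y \<in> H"
  obtain v where v: "v \<in> X" "v \<in> Y" using thicket_meet[OF H X Y] by blast
  then have "v \<in> V" using thicket_subset[OF H X] by blast
  then have "{t \<in> N. v \<in> L t} \<noteq> {}"
    using vine_decomposition_subtree[OF vd] by (simp add: connected_in_def)
  then obtain t where "t \<in> N" "v \<in> L t" by blast
  with v show "{t \<in> N. L t \<inter> X \<noteq> {}} \<inter> {t \<in> N. L t \<inter> Y \<noteq> {}} \<noteq> {}" by blast
qed

lemma vine_decomposition_bag_meets_thicket:
  assumes vd: "vine_decomposition V E N A L" and "thicket V E H"
  obtains t where "t \<in> N" "\<And>X. X \<in> H \<Longrightarrow> L t \<inter> X \<noteq> {}"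
proof -
  have "tree_on N A" using vd is_tree_imp_tree_on unfolding vine_decomposition_def by blast
  from tree_on_thicket_common_node[OF this thicket_bags_meeting[OF assms]]
  obtain t where "t \<in> N" "\<forall>X\<in>H. L t \<inter> X \<noteq> {}" by auto
  then show ?thesis using that by blast
qed

lemma hitting_number_le_card:
  assumes "S \<subseteq> V" "\<And>X. X \<in> H \<Longrightarrow> S \<inter> X \<noteq> {}"
  shows "hitting_number V H \<le> card S"
  unfolding hitting_number_def by (rule cInf_lower) (use assms in auto)

lemma le_hitting_number:
  assumes H: "thicket V E H"
    and bound: "\<And>S. S \<subseteq> V \<Longrightarrow> \<forall>X\<in>H. S \<inter> X \<noteq> {} \<Longrightarrow> m \<le> card S"
  shows "m \<le> hitting_number V H"
proof -
  have "V \<inter> X \<noteq> {}" if "X \<in> H" for X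
    using thicket_subset[OF H that] thicket_nonempty[OF H that] by blast
  then have "card V \<in> {card S | S. S \<subseteq> V \<and> (\<forall>X\<in>H. S \<inter> X \<noteq> {})}" by blast
  then show ?thesis
    unfolding hitting_number_def by (intro cInf_greatest) (use bound in blast)+
qed

lemma card_bag_le_width: "finite N \<Longrightarrow> t \<in> N \<Longrightarrow> card (L t) \<le> width N L"
  unfolding width_def by simp

lemma hitting_number_le_width:
  assumes vd: "vine_decomposition V E N A L" and H: "thicket V E H"
  shows "hitting_number V H \<le> width N L"
proof -
  obtain t where t: "t \<in> N" "\<And>X. X \<in> H \<Longrightarrow> L t \<inter> X \<noteq> {}"
    using vine_decomposition_bag_meets_thicket[OF assms] by blast
  have "L t \<subseteq> V" "finite N"
    using vd t(1) unfolding vine_decomposition_def is_tree_def by blast+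
  then show ?thesis
    using hitting_number_le_card[OF _ t(2)] card_bag_le_width[OF _ t(1)] by (meson order_trans)
qed

lemma vinewidth_le_width:
  fixes N :: "nat set"
  assumes "vine_decomposition V E N A L"
  shows "vinewidth V E \<le> width N L"
  unfolding vinewidth_def by (rule cInf_lower) (use assms in blast)+

lemma thicket_number_le_vinewidth:
  fixes N :: "nat set"
  assumes vd: "vine_decomposition V E N A L"
  shows "thicket_number V E \<le> vinewidth V E"
proof -
  let ?T = "{hitting_number V H | H. thicket V E H}"
  have bounded: "h \<le> vinewidth V E" if "h \<in> ?T" for h
    using that vd hitting_number_le_width unfolding vinewidth_def
    by (fastforce intro!: cInf_greatest)
  then have "finite ?T" by (meson finite_atMost finite_subset subsetI atMost_iff)
  moreover have "thicket V E {}" unfolding thicket_def by simp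
  then have "?T \<noteq> {}" by blast
  ultimately show ?thesis unfolding thicket_number_def using bounded by simp
qed

lemma hitting_number_le_thicket_number:
  assumes "finite V" "thicket V E H"
  shows "hitting_number V H \<le> thicket_number V E"
proof -
  let ?T = "{hitting_number V H | H. thicket V E H}"
  have "h \<le> card V" if h: "h \<in> ?T" for h
  proof -
    obtain H' where H': "thicket V E H'" and "h = hitting_number V H'" using h by blast
    moreover have "hitting_number V H' \<le> card V"
      using thicket_subset[OF H'] thicket_nonempty[OF H'] by (intro hitting_number_le_card) blast+
    ultimately show ?thesis by simp
  qed
  then have "finite ?T" by (meson finite_atMost finite_subset subsetI atMost_iff)
  then show ?thesis unfolding thicket_number_def by (rule Max_ge) (use assms(2) in blast)
qed

section \<open>The grid\<close>

lemma symp_grid_E: "symp grid_E"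
  unfolding symp_def grid_E_def by (simp add: abs_minus_commute)

definition grid_cross :: "nat \<Rightarrow> nat \<Rightarrow> nat \<Rightarrow> (nat \<times> nat) set" where
  "grid_cross k i j = ({i} \<times> {1..k}) \<union> ({1..k} \<times> {j})"

definition grid_crosses :: "nat \<Rightarrow> (nat \<times> nat) set set" where
  "grid_crosses k = (\<lambda>(i, j). grid_cross k i j) ` ({1..k} \<times> {1..k})"

lemma connected_in_grid_cross:
  assumes "i \<in> {1..k}" "j \<in> {1..k}"
  shows "connected_in grid_E (grid_cross k i j)"
proof -
  have "connected_in grid_E (Pair i ` {1..k})"
    by (rule connected_in_chain[OF symp_grid_E]) (use assms in \<open>auto simp: grid_E_def\<close>)
  moreover have "connected_in grid_E ((\<lambda>a. (a, j)) ` {1..k})"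
    by (rule connected_in_chain[OF symp_grid_E]) (use assms in \<open>auto simp: grid_E_def\<close>)
  moreover have "Pair i ` {1..k} \<inter> (\<lambda>a. (a, j)) ` {1..k} \<noteq> {}" using assms by blast
  ultimately have "connected_in grid_E (Pair i ` {1..k} \<union> (\<lambda>a. (a, j)) ` {1..k})"
    by (rule connected_in_Un)
  moreover have "Pair i ` {1..k} \<union> (\<lambda>a. (a, j)) ` {1..k} = grid_cross k i j"
    unfolding grid_cross_def by auto
  ultimately show ?thesis by simp
qed

lemma thicket_grid_crosses: "thicket (grid_V k) grid_E (grid_crosses k)"
  unfolding grid_crosses_def
proof (rule thicket_image)
  fix p q assume p: "p \<in> {1..k} \<times> {1..k}" and q: "q \<in> {1..k} \<times> {1..k}"
  show "(case p of (i, j) \<Rightarrow> grid_cross k i j) \<subseteq> grid_V k"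
    using p unfolding grid_cross_def grid_V_def by auto
  show "connected_in grid_E (case p of (i, j) \<Rightarrow> grid_cross k i j)"
    using p connected_in_grid_cross by auto
  have "(fst p, snd q) \<in> (case p of (i, j) \<Rightarrow> grid_cross k i j) \<inter> (case q of (i, j) \<Rightarrow> grid_cross k i j)"
    using p q unfolding grid_cross_def by (auto split: prod.splits)
  then show "(case p of (i, j) \<Rightarrow> grid_cross k i j) \<inter> (case q of (i, j) \<Rightarrow> grid_cross k i j) \<noteq> {}"
    by blast
qed simp

lemma card_ge_if_hits_grid_crosses:
  assumes "S \<subseteq> grid_V k" "\<forall>X\<in>grid_crosses k. S \<inter> X \<noteq> {}"
  shows "k \<le> card S"
proof (rule ccontr)
  assume "\<not> k \<le> card S"
  have "finite S" using assms(1) finite_subset unfolding grid_V_def by blast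
  have missed: "\<exists>i\<in>{1..k}. i \<notin> f ` S" for f :: "nat \<times> nat \<Rightarrow> nat"
  proof -
    have "card (f ` S) < card {1..k}"
      using card_image_le[OF \<open>finite S\<close>, of f] \<open>\<not> k \<le> card S\<close> by simp
    then have "\<not> {1..k} \<subseteq> f ` S"
      using card_mono[OF finite_imageI[OF \<open>finite S\<close>]] by (meson not_le)
    then show ?thesis by blast
  qed
  obtain i j where "i \<in> {1..k}" "i \<notin> fst ` S" "j \<in> {1..k}" "j \<notin> snd ` S"
    using missed[of fst] missed[of snd] by blast
  moreover have "S \<inter> grid_cross k i j \<noteq> {}"
    using assms(2) \<open>i \<in> {1..k}\<close> \<open>j \<in> {1..k}\<close> unfolding grid_crosses_def by blast
  ultimately show False unfolding grid_cross_def by (auto simp: image_iff)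
qed

definition path_adj :: "nat \<Rightarrow> nat \<Rightarrow> nat \<Rightarrow> bool" where
  "path_adj k s t \<longleftrightarrow> s \<in> {1..k} \<and> t \<in> {1..k} \<and> (s = Suc t \<or> t = Suc s)"

lemma is_tree_path:
  assumes "1 \<le> k"
  shows "is_tree {1..k} (path_adj k)"
  unfolding is_tree_def
proof (intro conjI allI impI)
  have "connected_in (path_adj k) (id ` {1..k})"
    by (rule connected_in_chain) (use assms in \<open>auto simp: path_adj_def symp_def\<close>)
  then show "connected_in (path_adj k) {1..k}" by simp
  fix s t assume st: "path_adj k s t"
  then show "s \<in> {1..k}" "t \<in> {1..k}" "s \<noteq> t" "path_adj k t s" unfolding path_adj_def by auto
  define m where "m = min s t"
  have m: "{s, t} = {m, Suc m}" "m \<in> {1..k}" "Suc m \<in> {1..k}"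
    using st unfolding path_adj_def m_def by auto
  let ?A' = "\<lambda>a b. path_adj k a b \<and> {a, b} \<noteq> {s, t}"
  have stays_below: "y \<le> m" if "linked_in ?A' {1..k} x y" "x \<le> m" for x y
    using that
  proof (induction rule: rtranclp_induct)
    case (step y z)
    then have "y \<le> m" "path_adj k y z" "{y, z} \<noteq> {m, Suc m}" using m(1) by auto
    then show ?case unfolding path_adj_def by auto
  qed
  show "\<not> connected_in ?A' {1..k}"
  proof
    assume "connected_in ?A' {1..k}"
    then have "linked_in ?A' {1..k} m (Suc m)" using m(2,3) unfolding connected_in_def by blast
    then show False using stays_below by fastforce
  qed
qed simp

definition grid_row :: "nat \<Rightarrow> nat \<Rightarrow> (nat \<times> nat) set" where
  "grid_row k r = {r} \<times> {1..k}"

lemma vine_decomposition_grid_rows: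
  assumes "1 \<le> k"
  shows "vine_decomposition (grid_V k) grid_E {1..k} (path_adj k) (grid_row k)"
  unfolding vine_decomposition_def
proof (intro conjI ballI impI)
  show "is_tree {1..k} (path_adj k)" by (rule is_tree_path[OF assms])
  show "grid_row k t \<subseteq> grid_V k" if "t \<in> {1..k}" for t
    using that unfolding grid_row_def grid_V_def by auto
  fix u v assume u: "u \<in> grid_V k" and v: "v \<in> grid_V k"
  have "{t \<in> {1..k}. u \<in> grid_row k t} = {fst u}" using u unfolding grid_row_def grid_V_def by auto
  then show "connected_in (path_adj k) {t \<in> {1..k}. u \<in> grid_row k t}"
    unfolding connected_in_def by simp
  assume "grid_E u v"
  then have "fst u = fst v \<or> path_adj k (fst u) (fst v)"
    using u v unfolding grid_E_def grid_V_def path_adj_def by auto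
  moreover have "fst u \<in> {t \<in> {1..k}. u \<in> grid_row k t}" "fst v \<in> {t \<in> {1..k}. v \<in> grid_row k t}"
    using u v unfolding grid_row_def grid_V_def by auto
  ultimately show "{t \<in> {1..k}. u \<in> grid_row k t} \<inter> {t \<in> {1..k}. v \<in> grid_row k t} \<noteq> {} \<or>
      (\<exists>s\<in>{t \<in> {1..k}. u \<in> grid_row k t}. \<exists>t\<in>{t \<in> {1..k}. v \<in> grid_row k t}. path_adj k s t)"
    by auto
qed

lemma width_grid_rows:
  assumes "1 \<le> k"
  shows "width {1..k} (grid_row k) = k"
proof -
  have "(\<lambda>t. card (grid_row k t)) ` {1..k} = {k}"
    using assms unfolding grid_row_def by (auto simp: card_cartesian_product)
  then show ?thesis unfolding width_def by simp
qed

theorem mainTheorem10: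
  fixes k :: nat
  assumes "k \<ge> 1"
  shows "thicket_number (grid_V k) grid_E = k \<and> vinewidth (grid_V k) grid_E = k"
proof -
  note rows = vine_decomposition_grid_rows[OF assms]
  have "k \<le> hitting_number (grid_V k) (grid_crosses k)"
    by (rule le_hitting_number[OF thicket_grid_crosses card_ge_if_hits_grid_crosses])
  also have "\<dots> \<le> thicket_number (grid_V k) grid_E"
    by (rule hitting_number_le_thicket_number[OF _ thicket_grid_crosses]) (simp add: grid_V_def)
  finally have lower: "k \<le> thicket_number (grid_V k) grid_E" .
  have "thicket_number (grid_V k) grid_E \<le> vinewidth (grid_V k) grid_E"
    by (rule thicket_number_le_vinewidth[OF rows])
  moreover have "vinewidth (grid_V k) grid_E \<le> k"
    using vinewidth_le_width[OF rows] width_grid_rows[OF assms] by simp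
  ultimately show ?thesis using lower by linarith
qed

end
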